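(* For every integer $k\ge1$ and every prime power $q$, $P(k,\mathbb{F}_q)=O(k,\mathbb{F}_q)$.
   Context: A sequence $(a_n)_{n\ge0}$ over $\mathbb{F}_q$ satisfies a linear recurrence of degree $k$ if there are $c_0,\dots,c_{k-1}\in\mathbb{F}_q$, with $c_0\neq0$ (standing assumption), such that $a_{n+k}=\sum_{i=0}^{k-1}c_ia_{n+i}$ for all $n\ge0$; such sequences are purely periodic and $\rho(\mathbf{a})$ is the least $m>0$ with $a_{n+m}=a_n$ for all $n\ge0$. $P(k,\mathbb{F}_q)$ is the set of all $\rho(\mathbf{a})$ for sequences $\mathbf{a}$ satisfying some linear recurrence of degree $k$ over $\mathbb{F}_q$. For nonzero $f(x)\in\mathbb{F}_q[x]$, write $f=x^rg$ with $r\ge0$, $\gcd(g,x)=1$, and let $\mathrm{ord}(f)$ be the least $n>0$ with $g\mid x^n-1$. $O(k,\mathbb{F}_q)=\{\mathrm{ord}(f): f\in\mathbb{F}_q[x],\ \deg f=k\}$. *)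

theory Defs
  imports "HOL-Computational_Algebra.Computational_Algebra"
begin

definition lin_rec :: "nat \<Rightarrow> (nat \<Rightarrow> 'a::field) \<Rightarrow> bool" where
  "lin_rec k a \<longleftrightarrow> (\<exists>c :: nat \<Rightarrow> 'a. c 0 \<noteq> 0 \<and>
      (\<forall>n. a (n + k) = (\<Sum>i<k. c i * a (n + i))))"

definition seq_period :: "(nat \<Rightarrow> 'a) \<Rightarrow> nat" where
  "seq_period a = (LEAST m. 0 < m \<and> (\<forall>n. a (n + m) = a n))"

definition P_set :: "nat \<Rightarrow> 'a::field itself \<Rightarrow> nat set" where
  "P_set k _ = {seq_period a | a :: nat \<Rightarrow> 'a. lin_rec k a}"

definition poly_ord :: "'a::field poly \<Rightarrow> nat" where
  "poly_ord f = (LEAST n. 0 < n \<and> (\<exists>r g. f = [:0, 1:] ^ r * g \<and> coprime g [:0, 1:]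
      \<and> g dvd [:0, 1:] ^ n - 1))"

definition O_set :: "nat \<Rightarrow> 'a::field itself \<Rightarrow> nat set" where
  "O_set k _ = {poly_ord f | f :: 'a poly. f \<noteq> 0 \<and> degree f = k}"

end

theory Submission
  imports Defs
begin

text \<open>Let a polynomial \<open>p\<close> act on sequences as \<open>p(E)\<close>, where \<open>E\<close> is the shift
  \<open>(E a) n = a (n + 1)\<close>. A sequence satisfies a recurrence of degree \<open>k\<close> iff it is annihilated
  by some \<open>f\<close> of degree \<open>k\<close> with \<open>f(0) \<noteq> 0\<close>, and it has period \<open>m\<close> iff it is annihilated by
  \<open>x^m - 1\<close>. The annihilating polynomials form an ideal, generated by a polynomial \<open>g\<close> with
  \<open>g(0) \<noteq> 0\<close>; so the least period of the sequence is the least \<open>m\<close> with \<open>g | x^m - 1\<close>, which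
  is the order of \<open>x^(k - deg g) g\<close>. Conversely, a polynomial \<open>f = x^r g\<close> of degree \<open>k\<close> with
  \<open>g(0) \<noteq> 0\<close> has the same order as \<open>g\<close>, and \<open>g\<close> generates the annihilator of the sequence
  \<open>n \<mapsto> [x^(deg g - 1)] (x^n mod g)\<close>, which is annihilated by \<open>g (x + 1)^r\<close> of degree \<open>k\<close>.\<close>

definition shift_apply :: "'a::comm_ring_1 poly \<Rightarrow> (nat \<Rightarrow> 'a) \<Rightarrow> nat \<Rightarrow> 'a" where
  "shift_apply p a n = (\<Sum>i\<le>degree p. coeff p i * a (n + i))"

definition annihilates :: "'a::comm_ring_1 poly \<Rightarrow> (nat \<Rightarrow> 'a) \<Rightarrow> bool" where
  "annihilates p a \<longleftrightarrow> (\<forall>n. shift_apply p a n = 0)"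

lemma shift_apply_eq_sum_atMost:
  assumes "degree p \<le> N"
  shows "shift_apply p a n = (\<Sum>i\<le>N. coeff p i * a (n + i))"
  unfolding shift_apply_def
  by (rule sum.mono_neutral_left) (use assms in \<open>auto simp: coeff_eq_0\<close>)

lemma shift_apply_0 [simp]: "shift_apply 0 a n = 0"
  by (simp add: shift_apply_def)

lemma shift_apply_1 [simp]: "shift_apply 1 a n = a n"
  by (simp add: shift_apply_def)

lemma shift_apply_zero_seq [simp]: "shift_apply p (\<lambda>_. 0) n = 0"
  by (simp add: shift_apply_def)

lemma shift_apply_add: "shift_apply (p + q) a n = shift_apply p a n + shift_apply q a n"
  by (simp add: shift_apply_eq_sum_atMost[OF degree_add_le_max]
      shift_apply_eq_sum_atMost[of _ "max (degree p) (degree q)"] distrib_right sum.distrib)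

lemma shift_apply_diff: "shift_apply (p - q) a n = shift_apply p a n - shift_apply q a n"
  using shift_apply_add[of "p - q" q a n] by simp

lemma shift_apply_sum: "shift_apply (\<Sum>i\<in>A. p i) a n = (\<Sum>i\<in>A. shift_apply (p i) a n)"
  by (induction A rule: infinite_finite_induct) (simp_all add: shift_apply_add)

lemma shift_apply_smult: "shift_apply (smult c p) a n = c * shift_apply p a n"
  by (simp only: shift_apply_eq_sum_atMost[OF degree_smult_le])
    (simp add: shift_apply_def sum_distrib_left mult.assoc)

lemma shift_apply_monom: "shift_apply (monom c m) a n = c * a (n + m)"
proof -
  have "shift_apply (monom c m) a n = (\<Sum>i\<le>m. (if m = i then c else 0) * a (n + i))"
    by (simp only: shift_apply_eq_sum_atMost[OF degree_monom_le] coeff_monom)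
  also have "\<dots> = (\<Sum>i\<le>m. if m = i then c * a (n + i) else 0)"
    by (rule sum.cong) auto
  finally show ?thesis
    by simp
qed

lemma shift_apply_pCons: "shift_apply (pCons c p) a n = c * a n + shift_apply p a (Suc n)"
proof -
  have "shift_apply (pCons c p) a n = (\<Sum>i\<le>Suc (degree p). coeff (pCons c p) i * a (n + i))"
    by (rule shift_apply_eq_sum_atMost) (simp add: degree_pCons_le)
  also have "\<dots> = c * a n + shift_apply p a (Suc n)"
    by (subst sum.atMost_Suc_shift) (simp add: shift_apply_def)
  finally show ?thesis .
qed

lemma shift_apply_mult: "shift_apply (p * q) a n = shift_apply p (shift_apply q a) n"
proof (induction p arbitrary: n)
  case (pCons c p)
  have "pCons c p * q = smult c q + pCons 0 (p * q)"
    by simp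
  with pCons.IH show ?case
    by (simp add: shift_apply_add shift_apply_smult shift_apply_pCons)
qed simp

lemma annihilates_dvd:
  assumes "annihilates f a" and "f dvd p"
  shows "annihilates p a"
proof -
  from \<open>f dvd p\<close> obtain q where "p = q * f"
    by (metis dvd_def mult.commute)
  moreover from assms(1) have "shift_apply f a = (\<lambda>_. 0)"
    by (auto simp: annihilates_def)
  ultimately show ?thesis
    by (simp add: annihilates_def shift_apply_mult)
qed

lemma periodic_iff_annihilates:
  "(\<forall>n. a (n + m) = a n) \<longleftrightarrow> annihilates ([:0, 1:] ^ m - 1) a"
proof -
  have X_power: "[:0, 1:] ^ m = monom 1 m"
    by (simp add: monom_altdef)
  show ?thesis
    unfolding annihilates_def shift_apply_diff X_power shift_apply_monom shift_apply_1 by simp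
qed

lemma lin_rec_imp_annihilates:
  fixes a :: "nat \<Rightarrow> 'a::field"
  assumes "lin_rec k a"
  obtains f where "degree f = k" "coeff f 0 \<noteq> 0" "annihilates f a"
proof -
  obtain c where c0: "c 0 \<noteq> 0" and rec: "\<And>n. a (n + k) = (\<Sum>i<k. c i * a (n + i))"
    using assms unfolding lin_rec_def by blast
  define f where "f = monom 1 k - (\<Sum>i<k. monom (c i) i)"
  have coeff_f: "coeff f j = (if j = k then 1 else if j < k then - c j else 0)" for j
  proof -
    have "coeff (\<Sum>i<k. monom (c i) i) j = (\<Sum>i<k. if i = j then c i else 0)"
      by (simp add: coeff_sum coeff_monom)
    also have "\<dots> = (if j < k then c j else 0)"
      by (simp add: sum.delta')
    finally show ?thesis
      by (auto simp: f_def coeff_monom)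
  qed
  have "degree f \<le> k"
    by (rule degree_le) (auto simp: coeff_f)
  moreover have "k \<le> degree f"
    by (rule le_degree) (simp add: coeff_f)
  ultimately have "degree f = k"
    by (rule antisym)
  moreover have "coeff f 0 \<noteq> 0"
    using c0 by (simp add: coeff_f)
  moreover have "annihilates f a"
    by (simp add: annihilates_def f_def shift_apply_diff shift_apply_sum shift_apply_monom
        rec[symmetric])
  ultimately show ?thesis
    by (rule that)
qed

lemma annihilates_imp_lin_rec:
  fixes a :: "nat \<Rightarrow> 'a::field"
  assumes "degree f = k" and "coeff f 0 \<noteq> 0" and "annihilates f a"
  shows "lin_rec k a"
proof -
  define l where "l = lead_coeff f"
  have "f \<noteq> 0" and l0: "l \<noteq> 0"
    using assms(2) by (auto simp: l_def)
  have rec: "a (n + k) = (\<Sum>i<k. - (coeff f i / l) * a (n + i))" for n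
  proof -
    have "0 = shift_apply f a n"
      using assms(3) by (simp add: annihilates_def)
    also have "\<dots> = (\<Sum>i<k. coeff f i * a (n + i)) + l * a (n + k)"
      by (simp add: shift_apply_def assms(1) l_def lessThan_Suc_atMost[symmetric])
    finally have "a (n + k) * l = - (\<Sum>i<k. coeff f i * a (n + i))"
      by (simp add: eq_neg_iff_add_eq_0 add.commute mult.commute)
    then have "a (n + k) = - (\<Sum>i<k. coeff f i * a (n + i)) / l"
      using l0 by (simp add: field_simps)
    then show ?thesis
      by (simp add: sum_divide_distrib sum_negf)
  qed
  show ?thesis
    unfolding lin_rec_def using assms(2) l0 rec by (intro exI[of _ "\<lambda>i. - (coeff f i / l)"]) simp
qed

lemma annihilator_principal:
  fixes a :: "nat \<Rightarrow> 'a::field"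
  assumes "f \<noteq> 0" and "annihilates f a"
  obtains g where "g \<noteq> 0" and "\<And>p. annihilates p a \<longleftrightarrow> g dvd p"
proof -
  have "\<exists>g. (g \<noteq> 0 \<and> annihilates g a) \<and>
      (\<forall>p. p \<noteq> 0 \<and> annihilates p a \<longrightarrow> degree g \<le> degree p)"
    using assms by (intro ex_has_least_nat) auto
  then obtain g where g: "g \<noteq> 0" "annihilates g a"
    and least: "\<And>p. p \<noteq> 0 \<Longrightarrow> annihilates p a \<Longrightarrow> degree g \<le> degree p"
    by blast
  have "g dvd p" if p: "annihilates p a" for p
  proof (rule ccontr)
    assume "\<not> g dvd p"
    then have nonzero: "p mod g \<noteq> 0"
      by (simp add: mod_eq_0_iff_dvd)
    have "annihilates (g * (p div g)) a"
      by (rule annihilates_dvd[OF g(2)]) simp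
    then have "annihilates (p - g * (p div g)) a"
      using p by (simp add: annihilates_def shift_apply_diff)
    then have "degree g \<le> degree (p mod g)"
      using least nonzero by (simp add: minus_mult_div_eq_mod)
    with degree_mod_less'[OF g(1) nonzero] show False
      by simp
  qed
  then have "annihilates p a \<longleftrightarrow> g dvd p" for p
    using annihilates_dvd[OF g(2)] by blast
  with g(1) show ?thesis
    by (rule that)
qed

lemma X_dvd_iff: "[:0, 1:] dvd p \<longleftrightarrow> coeff p 0 = (0::'a::field)"
  using dvd_iff_poly_eq_0[of 0 p] by (simp add: poly_0_coeff_0)

lemma coprime_X_iff: "coprime p [:0, 1:] \<longleftrightarrow> coeff p 0 \<noteq> (0::'a::field)"
proof
  have "prime_elem [:0, 1::'a:]"
    by (rule prime_elem_linear_field_poly) simp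
  then show "coprime p [:0, 1:]" if "coeff p 0 \<noteq> 0"
    using that by (intro coprimeI) (metis X_dvd_iff dvd_trans prime_elemD2)
  show "coeff p 0 \<noteq> 0" if "coprime p [:0, 1:]"
    using that coprime_common_divisor[of p "[:0, 1::'a:]" "[:0, 1:]"] by (auto simp: X_dvd_iff)
qed

lemma dvd_X_power_mult_cancel:
  fixes g :: "'a::field poly"
  assumes "coeff g 0 \<noteq> 0" and "g dvd [:0, 1:] ^ r * h"
  shows "g dvd h"
  using assms(2)
proof (induction r arbitrary: h)
  case (Suc r)
  then have "g dvd [:0, 1:] * ([:0, 1:] ^ r * h)"
    by (simp add: ac_simps)
  then obtain q where q: "[:0, 1:] * ([:0, 1:] ^ r * h) = g * q"
    by (rule dvdE)
  then have "coeff g 0 * coeff q 0 = 0"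
    by (metis coeff_mult_0 mult_zero_left coeff_pCons_0)
  then have "[:0, 1:] dvd q"
    using assms(1) by (subst X_dvd_iff) simp
  then obtain q' where "q = [:0, 1:] * q'"
    by (rule dvdE)
  with q have "g dvd [:0, 1:] ^ r * h"
    by (simp add: ac_simps)
  then show ?case
    by (rule Suc.IH)
qed simp

lemma poly_ord_eq_Least:
  fixes g :: "'a::field poly"
  assumes "f = [:0, 1:] ^ r * g" and "coeff g 0 \<noteq> 0"
  shows "poly_ord f = (LEAST n. 0 < n \<and> g dvd [:0, 1:] ^ n - 1)"
proof -
  have "(\<exists>r' g'. f = [:0, 1:] ^ r' * g' \<and> coprime g' [:0, 1:] \<and> g' dvd [:0, 1:] ^ n - 1)
      \<longleftrightarrow> g dvd [:0, 1:] ^ n - 1" for n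
  proof
    assume "\<exists>r' g'. f = [:0, 1:] ^ r' * g' \<and> coprime g' [:0, 1:] \<and> g' dvd [:0, 1:] ^ n - 1"
    then obtain r' g' where f': "f = [:0, 1:] ^ r' * g'" and "g' dvd [:0, 1:] ^ n - 1"
      by blast
    moreover have "g dvd [:0, 1:] ^ r' * g'"
      using assms(1) f' by (metis dvd_triv_right)
    then have "g dvd g'"
      using assms(2) by (rule dvd_X_power_mult_cancel[rotated])
    ultimately show "g dvd [:0, 1:] ^ n - 1"
      by (blast intro: dvd_trans)
  qed (use assms coprime_X_iff in blast)
  then show ?thesis
    by (simp add: poly_ord_def)
qed

lemma seq_period_eq_Least:
  fixes g :: "'a::field poly"
  assumes "\<And>p. annihilates p a \<longleftrightarrow> g dvd p"
  shows "seq_period a = (LEAST n. 0 < n \<and> g dvd [:0, 1:] ^ n - 1)"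
  by (simp add: seq_period_def periodic_iff_annihilates assms)

definition impulse_seq :: "'a::field poly \<Rightarrow> nat \<Rightarrow> 'a" where
  "impulse_seq g n = coeff (monom 1 n mod g) (degree g - 1)"

lemma shift_apply_impulse_seq:
  "shift_apply p (impulse_seq g) n = coeff ((monom 1 n * p) mod g) (degree g - 1)"
proof (induction p arbitrary: n)
  case (pCons c p)
  have "monom 1 n * pCons c p = smult c (monom 1 n) + monom 1 (Suc n) * p"
    by (simp add: monom_Suc algebra_simps)
  then have "coeff ((monom 1 n * pCons c p) mod g) (degree g - 1)
      = c * impulse_seq g n + coeff ((monom 1 (Suc n) * p) mod g) (degree g - 1)"
    by (simp only: poly_mod_add_left mod_smult_left coeff_add coeff_smult impulse_seq_def)
  then show ?case
    by (simp only: shift_apply_pCons pCons.IH)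
qed simp

lemma annihilates_impulse_seq_iff:
  fixes g :: "'a::field poly"
  assumes "g \<noteq> 0"
  shows "annihilates p (impulse_seq g) \<longleftrightarrow> g dvd p"
proof
  assume ann: "annihilates p (impulse_seq g)"
  show "g dvd p"
  proof (rule ccontr)
    define h where "h = p mod g"
    define j where "j = degree g - 1 - degree h"
    assume "\<not> g dvd p"
    then have "h \<noteq> 0" and "degree h < degree g"
      using degree_mod_less'[OF assms] by (auto simp: h_def dvd_eq_mod_eq_0)
    \<comment> \<open>shifting by \<open>j\<close> moves the leading coefficient of \<open>p mod g\<close> to the observed position\<close>
    have "(monom 1 j * p) mod g = (monom 1 j * h) mod g"
      by (simp add: h_def mod_mult_right_eq)
    also have "\<dots> = monom 1 j * h"
      using \<open>h \<noteq> 0\<close> \<open>degree h < degree g\<close>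
      by (intro mod_poly_less) (simp add: j_def degree_mult_eq degree_monom_eq)
    finally have "(monom 1 j * p) mod g = monom 1 j * h" .
    then have "shift_apply p (impulse_seq g) j = lead_coeff h"
      using \<open>degree h < degree g\<close> by (simp add: shift_apply_impulse_seq coeff_monom_mult j_def)
    with ann \<open>h \<noteq> 0\<close> show False
      by (simp add: annihilates_def)
  qed
next
  assume "g dvd p"
  then obtain q where "p = g * q"
    by (rule dvdE)
  then have "monom 1 n * p = g * (monom 1 n * q)" for n
    by (simp add: ac_simps)
  then show "annihilates p (impulse_seq g)"
    by (simp add: annihilates_def shift_apply_impulse_seq)
qed

lemma seq_period_mem_O_set:
  fixes a :: "nat \<Rightarrow> 'a::field"
  assumes "lin_rec k a"
  shows "seq_period a \<in> O_set k TYPE('a)"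
proof -
  obtain f where f: "degree f = k" "coeff f 0 \<noteq> 0" "annihilates f a"
    using assms by (rule lin_rec_imp_annihilates)
  then have "f \<noteq> 0"
    by auto
  then obtain g where "g \<noteq> 0" and g: "\<And>p. annihilates p a \<longleftrightarrow> g dvd p"
    using annihilator_principal f(3) by blast
  then have "g dvd f"
    using f(3) by blast
  then have "degree g \<le> k"
    using dvd_imp_degree_le \<open>f \<noteq> 0\<close> f(1) by blast
  from \<open>g dvd f\<close> obtain q where "f = g * q"
    by (rule dvdE)
  then have "coeff g 0 \<noteq> 0"
    using f(2) by (simp add: coeff_mult_0)
  define F where "F = [:0, 1:] ^ (k - degree g) * g"
  have "F \<noteq> 0" and "degree F = k"
    using \<open>g \<noteq> 0\<close> \<open>degree g \<le> k\<close> by (simp_all add: F_def degree_mult_eq degree_linear_power)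
  moreover have "poly_ord F = seq_period a"
    using poly_ord_eq_Least[OF F_def \<open>coeff g 0 \<noteq> 0\<close>] seq_period_eq_Least[OF g] by simp
  ultimately have "seq_period a = poly_ord F \<and> F \<noteq> 0 \<and> degree F = k"
    by simp
  then show ?thesis
    unfolding O_set_def by blast
qed

lemma poly_ord_mem_P_set:
  fixes f :: "'a::field poly"
  assumes "f \<noteq> 0" and "degree f = k"
  shows "poly_ord f \<in> P_set k TYPE('a)"
proof -
  obtain r g where f: "f = [:0, 1:] ^ r * g" and "\<not> [:0, 1:] dvd g"
    using order_decomp[OF assms(1), of 0] by auto
  then have "g \<noteq> 0" and g0: "coeff g 0 \<noteq> 0"
    using X_dvd_iff by auto
  define F where "F = g * [:1, 1:] ^ r"
  have "degree F = k"
    using assms(2) \<open>g \<noteq> 0\<close>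
    by (simp add: f F_def degree_mult_eq degree_linear_power)
  moreover have "coeff F 0 \<noteq> 0"
    using g0 by (simp add: F_def coeff_mult_0 coeff_0_power)
  moreover have "annihilates F (impulse_seq g)"
    by (simp add: annihilates_impulse_seq_iff[OF \<open>g \<noteq> 0\<close>] F_def)
  ultimately have "lin_rec k (impulse_seq g)"
    by (rule annihilates_imp_lin_rec)
  moreover have "seq_period (impulse_seq g) = poly_ord f"
    using seq_period_eq_Least[OF annihilates_impulse_seq_iff[OF \<open>g \<noteq> 0\<close>]]
      poly_ord_eq_Least[OF f g0] by simp
  ultimately have "poly_ord f = seq_period (impulse_seq g) \<and> lin_rec k (impulse_seq g)"
    by simp
  then show ?thesis
    unfolding P_set_def by blast
qed

theorem lemma3p2:
  fixes k :: nat
  assumes "k \<ge> 1"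
  shows "P_set k TYPE('a::{field,finite}) = O_set k TYPE('a)"
proof
  show "P_set k TYPE('a) \<subseteq> O_set k TYPE('a)"
    using seq_period_mem_O_set by (auto simp: P_set_def)
  show "O_set k TYPE('a) \<subseteq> P_set k TYPE('a)"
    using poly_ord_mem_P_set by (auto simp: O_set_def)
qed

end
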